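(* For $n\ge 2$ agents with values i.i.d. from any (possibly irregular) distribution with revenue curve $R$, and any quantile $q\le 1-1/n$, there exists an integer $1\le k\le (1-q)n$ such that the revenue of the highest-$k$-bids-win auction is at least a quarter of $nR(q)$, i.e., $nP_k\ge \tfrac14\, nR(q)$.
   Context: Values are i.i.d. from a continuous distribution $F$ on $[0,1]$; with quantile $q=F(v)$ and $v(q)=F^{-1}(q)$, the revenue curve $R(q)=v(q)(1-q)$ is the revenue of posting price $v(q)$ to a single agent. $P_k$ is the per-agent Bayes–Nash equilibrium revenue of the $n$-agent highest-$k$-bids-win auction (total revenue $nP_k$). *)

theory Defs
  imports "HOL-Analysis.Analysis"
begin

definition cont_dist_01 :: "(real \<Rightarrow> real) \<Rightarrow> bool" where
  "cont_dist_01 F \<longleftrightarrow> continuous_on UNIV F \<and> mono F \<and>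
     (\<forall>x\<le>0. F x = 0) \<and> (\<forall>x\<ge>1. F x = 1)"

text \<open>Quantile function v(q) = F^{-1}(q) (largest value with F v = q; F is continuous).\<close>
definition value_of_quantile :: "(real \<Rightarrow> real) \<Rightarrow> real \<Rightarrow> real" where
  "value_of_quantile F q = Sup {x \<in> {0..1}. F x \<le> q}"

definition revenue_curve :: "(real \<Rightarrow> real) \<Rightarrow> real \<Rightarrow> real" where
  "revenue_curve F q = value_of_quantile F q * (1 - q)"

text \<open>Interim allocation rule of the n-agent highest-k-bids-win auction for an agent at
  quantile q: probability that at most k-1 of the other n-1 agents have higher quantile.\<close>
definition alloc_topk :: "nat \<Rightarrow> nat \<Rightarrow> real \<Rightarrow> real" where
  "alloc_topk n k q = (\<Sum>j<k. real ((n - 1) choose j) * (1 - q) ^ j * q ^ (n - 1 - j))"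

text \<open>Per-agent Bayes-Nash equilibrium revenue P_k (revenue equivalence:
  expected marginal revenue of the allocation rule, P = integral of R(q) x'(q) dq).\<close>
definition per_agent_rev :: "(real \<Rightarrow> real) \<Rightarrow> nat \<Rightarrow> nat \<Rightarrow> real" where
  "per_agent_rev F n k = integral {0..1} (\<lambda>q. revenue_curve F q * deriv (alloc_topk n k) q)"

end

theory Submission
  imports Defs
begin

(*
  Write p = 1 - q and B(N,k) for the Bernstein basis polynomials. By revenue equivalence,
  P_k integrates the value v(t) against the density k B(n-1,k)(1-t) over [0,1]; dropping the
  part t < q and using that v is nondecreasing gives
    P_k >= v(q) (k/n) Pr[Bin(n,p) > k],
  while R(q) = v(q) p. So it suffices to find 1 <= k <= np with
    Pr[Bin(n,p) <= k] + np/(4k) <= 1.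
  As a function of p the left-hand side has derivative n (1/(4k) - B(n-1,k)(p)), and B(n-1,k)
  is unimodal with mode k/(n-1); hence on an interval that starts beyond the mode, or at a point
  where B(n-1,k) >= 1/(4k), it is bounded by its values at the two endpoints. We take k = 1 for
  np <= 3, k = 2 for 3 < np <= 7 and k = floor((np-1)/2) otherwise, with endpoints of the form
  c/n, and check the endpoints using 1 - x <= exp(-x - x^2/2) and Chernoff's bound.
*)

section \<open>Bernstein polynomials and the binomial distribution\<close>

lemma has_real_derivative_Bernstein_Suc:
  "(Bernstein N (Suc j) has_real_derivative
      real N * (Bernstein (N - 1) j x - Bernstein (N - 1) (Suc j) x)) (at x)"
proof -
  let ?c = "real (N choose Suc j)"
  have "(Bernstein N (Suc j) has_real_derivative
      ?c * real (Suc j) * (x ^ j * (1 - x) ^ (N - Suc j))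
        - ?c * real (N - Suc j) * (x ^ Suc j * (1 - x) ^ (N - Suc j - 1))) (at x)"
    unfolding Bernstein_def[abs_def]
    by (rule derivative_eq_intros refl)+ (simp add: algebra_simps)
  also have "?c * real (Suc j) = real N * real ((N - 1) choose j)"
    using binomial_absorption[of j N] by (metis of_nat_mult mult.commute)
  also have "?c * real (N - Suc j) = real N * real ((N - 1) choose Suc j)"
    using binomial_absorb_comp[of N "Suc j"] by (metis of_nat_mult mult.commute)
  also have "N - Suc j = N - 1 - j"
    by simp
  also have "N - 1 - j - 1 = N - 1 - Suc j"
    by simp
  finally show ?thesis
    unfolding Bernstein_def by (simp only: right_diff_distrib mult.assoc)
qed

lemma has_real_derivative_Bernstein_0:
  "(Bernstein N 0 has_real_derivative - real N * Bernstein (N - 1) 0 x) (at x)"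
  unfolding Bernstein_def[abs_def] by (auto intro!: derivative_eq_intros)

lemma Bernstein_absorption:
  "real N * x * Bernstein (N - 1) j x = real (Suc j) * Bernstein N (Suc j) x"
proof -
  have "real (Suc j) * real (N choose Suc j) = real N * real ((N - 1) choose j)"
    using binomial_absorption[of j N] by (metis of_nat_mult)
  moreover have "N - 1 - j = N - Suc j"
    by simp
  ultimately show ?thesis
    unfolding Bernstein_def by (simp add: mult_ac)
qed

lemma Bernstein_absorb_comp:
  "real N * (1 - x) * Bernstein (N - 1) k x = real (N - k) * Bernstein N k x"
proof (cases "k < N")
  case True
  have "real (N - k) * real (N choose k) = real N * real ((N - 1) choose k)"
    using binomial_absorb_comp[of N k] by (metis of_nat_mult)
  moreover have "(1 - x) ^ (N - k) = (1 - x) * (1 - x) ^ (N - 1 - k)"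
    using True by (simp flip: power_Suc add: Suc_diff_Suc)
  ultimately show ?thesis
    unfolding Bernstein_def by (simp add: mult_ac)
qed (auto simp: Bernstein_def)

lemma Bernstein_Suc_deriv_factorization:
  assumes "Suc j \<le> N"
  shows "x * (1 - x) * (real N * (Bernstein (N - 1) j x - Bernstein (N - 1) (Suc j) x))
    = (real (Suc j) - real N * x) * Bernstein N (Suc j) x"
proof -
  have "x * (1 - x) * (real N * (Bernstein (N - 1) j x - Bernstein (N - 1) (Suc j) x))
      = (1 - x) * (real N * x * Bernstein (N - 1) j x)
        - x * (real N * (1 - x) * Bernstein (N - 1) (Suc j) x)"
    by (simp add: algebra_simps)
  also have "\<dots> = (real (Suc j) - real N * x) * Bernstein N (Suc j) x"
    unfolding Bernstein_absorption Bernstein_absorb_comp using assms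
    by (simp add: of_nat_diff algebra_simps)
  finally show ?thesis .
qed

lemma Bernstein_mono_on:
  assumes "Suc j \<le> N"
  shows "mono_on {0..Suc j / N} (Bernstein N (Suc j))"
proof (rule mono_onI)
  fix s t assume "s \<in> {0..Suc j / N}" "t \<in> {0..Suc j / N}" "s \<le> t"
  then have "0 \<le> s" "t \<le> Suc j / N"
    by auto
  moreover have "Suc j / N \<le> 1"
    using assms by simp
  ultimately have st: "0 \<le> s" "s \<le> t" "t \<le> 1" "real N * t \<le> Suc j"
    using assms \<open>s \<le> t\<close> by (linarith, linarith, linarith, simp add: field_simps)
  show "Bernstein N (Suc j) s \<le> Bernstein N (Suc j) t"
  proof (rule DERIV_nonneg_imp_increasing_open[OF \<open>s \<le> t\<close>])
    fix y assume "s < y" "y < t"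
    then have y: "0 < y" "y < 1" "real N * y \<le> Suc j"
      using st mult_left_mono[of y t "real N"] by auto
    let ?d = "real N * (Bernstein (N - 1) j y - Bernstein (N - 1) (Suc j) y)"
    have "0 \<le> y * (1 - y) * ?d"
      unfolding Bernstein_Suc_deriv_factorization[OF assms] using y by (simp add: Bernstein_nonneg)
    moreover have "0 < y * (1 - y)"
      using y by simp
    ultimately have "0 \<le> ?d"
      using mult_pos_neg[of "y * (1 - y)" ?d] by linarith
    then show "\<exists>d. (Bernstein N (Suc j) has_real_derivative d) (at y) \<and> 0 \<le> d"
      using has_real_derivative_Bernstein_Suc by blast
  qed (meson has_real_derivative_Bernstein_Suc DERIV_continuous continuous_at_imp_continuous_on)
qed

lemma Bernstein_antimono_on:
  assumes "Suc j \<le> N"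
  shows "antimono_on {Suc j / N..1} (Bernstein N (Suc j))"
proof (rule monotone_onI)
  fix s t assume "s \<in> {Suc j / N..1}" "t \<in> {Suc j / N..1}" "s \<le> t"
  then have "Suc j / N \<le> s" "t \<le> 1"
    by auto
  moreover have "0 < Suc j / N"
    using assms by simp
  ultimately have st: "0 < s" "s \<le> t" "t \<le> 1" "Suc j \<le> real N * s"
    using assms \<open>s \<le> t\<close> by (linarith, linarith, linarith, simp add: field_simps)
  show "Bernstein N (Suc j) t \<le> Bernstein N (Suc j) s"
  proof (rule DERIV_nonpos_imp_decreasing_open[OF \<open>s \<le> t\<close>])
    fix y assume "s < y" "y < t"
    then have y: "0 < y" "y < 1" "Suc j \<le> real N * y"
      using st mult_left_mono[of s y "real N"] by auto
    let ?d = "real N * (Bernstein (N - 1) j y - Bernstein (N - 1) (Suc j) y)"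
    have "y * (1 - y) * ?d \<le> 0"
      unfolding Bernstein_Suc_deriv_factorization[OF assms] using y
      by (simp add: Bernstein_nonneg mult_nonpos_nonneg)
    moreover have "0 < y * (1 - y)"
      using y by simp
    ultimately have "?d \<le> 0"
      using mult_pos_pos[of "y * (1 - y)" ?d] by linarith
    then show "\<exists>d. (Bernstein N (Suc j) has_real_derivative d) (at y) \<and> d \<le> 0"
      using has_real_derivative_Bernstein_Suc by blast
  qed (meson has_real_derivative_Bernstein_Suc DERIV_continuous continuous_at_imp_continuous_on)
qed

(* binom_cdf N k p is the probability that Bin(N, p) is strictly smaller than k. *)
definition binom_cdf :: "nat \<Rightarrow> nat \<Rightarrow> real \<Rightarrow> real" where
  "binom_cdf N k p = (\<Sum>j<k. Bernstein N j p)"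

lemma has_real_derivative_binom_cdf:
  "(binom_cdf N (Suc k) has_real_derivative - real N * Bernstein (N - 1) k p) (at p)"
proof (induction k)
  case 0
  then show ?case
    using has_real_derivative_Bernstein_0 by (simp add: binom_cdf_def[abs_def])
next
  case (Suc k)
  have "binom_cdf N (Suc (Suc k)) = (\<lambda>p. binom_cdf N (Suc k) p + Bernstein N (Suc k) p)"
    by (simp add: binom_cdf_def[abs_def])
  with DERIV_add[OF Suc has_real_derivative_Bernstein_Suc[of N k p]] show ?case
    by (simp add: algebra_simps)
qed

lemma binom_cdf_at_0: "binom_cdf N (Suc k) 0 = 1"
  by (simp add: binom_cdf_def Bernstein_def sum.lessThan_Suc_shift)

lemma binom_cdf_at_1: "k < N \<Longrightarrow> binom_cdf N (Suc k) 1 = 0"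
  unfolding binom_cdf_def Bernstein_def by (intro sum.neutral) auto

lemma binom_cdf_two:
  assumes "1 \<le> N"
  shows "binom_cdf N 2 p = (1 - p) ^ (N - 1) * (1 - p + real N * p)"
proof -
  have "binom_cdf N 2 p = (1 - p) ^ N + real N * p * (1 - p) ^ (N - 1)"
    by (simp add: binom_cdf_def Bernstein_def numeral_2_eq_2)
  also have "(1 - p) ^ N = (1 - p) ^ (N - 1) * (1 - p)"
    using assms by (simp flip: power_Suc2)
  finally show ?thesis
    by (simp add: algebra_simps)
qed

lemma binom_cdf_three:
  assumes "2 \<le> N"
  shows "binom_cdf N 3 p
    = (1 - p) ^ (N - 2) * ((1 - p)\<^sup>2 + real N * p * (1 - p) + real (N choose 2) * p\<^sup>2)"
proof -
  have "binom_cdf N 3 p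
      = (1 - p) ^ N + real N * p * (1 - p) ^ (N - 1) + real (N choose 2) * p\<^sup>2 * (1 - p) ^ (N - 2)"
    by (simp add: binom_cdf_def Bernstein_def numeral_3_eq_3 numeral_2_eq_2)
  also have "(1 - p) ^ N = (1 - p) ^ (N - 2) * (1 - p)\<^sup>2"
    using assms by (metis le_add_diff_inverse2 power_add)
  also have "(1 - p) ^ (N - 1) = (1 - p) ^ (N - 2) * (1 - p)"
    using assms power_add[of "1 - p" "N - 2" 1] by (simp add: Suc_diff_Suc numeral_2_eq_2)
  finally show ?thesis
    by (simp add: algebra_simps)
qed

lemma binom_cdf_le_chernoff:
  fixes p t :: real
  assumes p: "0 \<le> p" "p \<le> 1" and t: "0 < t" "t \<le> 1"
  shows "binom_cdf N (Suc k) p \<le> (1 / t) ^ k * exp (- (real N * p * (1 - t)))"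
proof -
  have "binom_cdf N (Suc k) p \<le> (\<Sum>j\<le>k. (1 / t) ^ k * (t ^ j * Bernstein N j p))"
  proof -
    have "Bernstein N j p \<le> (1 / t) ^ k * (t ^ j * Bernstein N j p)" if "j \<le> k" for j
    proof -
      have "t ^ k \<le> t ^ j"
        using t that by (intro power_decreasing) auto
      then have ge1: "1 \<le> (1 / t) ^ k * t ^ j"
        using t by (simp add: power_one_over field_simps)
      show ?thesis
        using mult_right_mono[OF ge1 Bernstein_nonneg[OF p, of N j]] by (simp add: mult.assoc)
    qed
    then show ?thesis
      unfolding binom_cdf_def lessThan_Suc_atMost by (intro sum_mono) auto
  qed
  also have "\<dots> \<le> (1 / t) ^ k * (\<Sum>j\<le>N. t ^ j * Bernstein N j p)"
  proof -
    have "(\<Sum>j\<le>k. t ^ j * Bernstein N j p) \<le> (\<Sum>j\<le>max k N. t ^ j * Bernstein N j p)"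
      using p t by (intro sum_mono2) (auto simp: Bernstein_nonneg)
    also have "\<dots> = (\<Sum>j\<le>N. t ^ j * Bernstein N j p)"
      by (rule sum.mono_neutral_right) (auto simp: Bernstein_def)
    finally show ?thesis
      using t by (simp add: sum_distrib_left[symmetric])
  qed
  also have "(\<Sum>j\<le>N. t ^ j * Bernstein N j p) = (p * t + (1 - p)) ^ N"
    unfolding binomial_ring Bernstein_def
    by (intro sum.cong refl) (simp add: power_mult_distrib mult_ac)
  also have "\<dots> = (1 - p * (1 - t)) ^ N"
    by (simp add: algebra_simps)
  also have "\<dots> \<le> exp (- (p * (1 - t))) ^ N"
    using p t by (intro power_mono) (auto simp: mult_le_one exp_ge_add_one_self[of "- _", simplified])
  also have "\<dots> = exp (- (real N * p * (1 - t)))"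
    by (simp flip: exp_of_nat_mult)
  finally show ?thesis
    using t by (simp add: mult_left_mono)
qed

lemma binom_cdf_le_chernoff_half:
  assumes "0 \<le> p" "p \<le> 1" "real N * p = 2 * real k + c"
  shows "binom_cdf N (Suc k) p \<le> (2 / exp 1) ^ k * exp (- (c / 2))"
proof -
  have "binom_cdf N (Suc k) p \<le> (1 / (1 / 2)) ^ k * exp (- (real N * p * (1 - 1 / 2)))"
    using assms by (intro binom_cdf_le_chernoff) auto
  also have "real N * p * (1 - 1 / 2) = real k + c / 2"
    using assms(3) by simp
  also have "exp (- (real k + c / 2)) = exp (- (c / 2)) / exp 1 ^ k"
    by (subst minus_add_distrib, subst exp_add) (simp add: exp_minus field_simps flip: exp_of_nat_mult)
  also have "(1 / (1 / 2)) ^ k * (exp (- (c / 2)) / exp 1 ^ k) = (2 / exp 1) ^ k * exp (- (c / 2))"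
    by (simp add: power_divide)
  finally show ?thesis .
qed

section \<open>Numerical estimates\<close>

lemma one_minus_le_exp_quadratic:
  fixes x :: real
  assumes "0 \<le> x"
  shows "1 - x \<le> exp (- (x + x\<^sup>2 / 2))"
proof -
  define f where "f y = exp (- (y + y\<^sup>2 / 2)) - (1 - y)" for y :: real
  have f': "(f has_real_derivative 1 - (1 + y) * exp (- (y + y\<^sup>2 / 2))) (at y)" for y
    unfolding f_def by (auto intro!: derivative_eq_intros simp: algebra_simps)
  have f'_nonneg: "(1 + y) * exp (- (y + y\<^sup>2 / 2)) \<le> 1" if "0 \<le> y" for y :: real
  proof -
    have "1 + y \<le> exp (y + y\<^sup>2 / 2)"
      using exp_ge_add_one_self[of "y + y\<^sup>2 / 2"] zero_le_power2[of y] by linarith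
    then show ?thesis
      by (simp add: exp_minus field_simps)
  qed
  have "f 0 \<le> f x"
  proof (rule DERIV_nonneg_imp_increasing_open[OF assms])
    show "\<exists>d. (f has_real_derivative d) (at y) \<and> 0 \<le> d" if "0 < y" for y
      using f' f'_nonneg that by force
    show "continuous_on {0..x} f"
      using f' by (meson DERIV_continuous continuous_at_imp_continuous_on)
  qed
  then show ?thesis
    by (simp add: f_def)
qed

lemma one_minus_power_le_exp_quadratic:
  fixes x :: real
  assumes "0 \<le> x" "x \<le> 1"
  shows "(1 - x) ^ m \<le> exp (- (real m * (x + x\<^sup>2 / 2)))"
proof -
  have "(1 - x) ^ m \<le> exp (- (x + x\<^sup>2 / 2)) ^ m"
    using assms by (intro power_mono one_minus_le_exp_quadratic) auto
  then show ?thesis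
    by (simp add: algebra_simps flip: exp_of_nat_mult)
qed

lemma exp_of_nat_ge: "(2.718 :: real) ^ m \<le> exp (real m)"
proof -
  have "2.718 \<le> exp (1 :: real)"
    using e_approx_32 by (simp add: abs_if split: if_split_asm)
  then have "(2.718 :: real) ^ m \<le> exp 1 ^ m"
    by (intro power_mono) auto
  then show ?thesis
    by (simp flip: exp_of_nat_mult)
qed

lemma exp_3_ge: "20 \<le> exp (3 :: real)"
  using exp_of_nat_ge[of 3] by (simp add: power_divide)

lemma two_div_e_power_le:
  assumes "3 \<le> k"
  shows "(2 / exp 1) ^ k \<le> (2 / 5 :: real)"
proof -
  have "(2 / exp 1) ^ k \<le> (2 / exp 1 :: real) ^ 3"
    using assms e_less_272 exp_of_nat_ge[of 1] by (intro power_decreasing) auto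
  also have "\<dots> = 8 / exp 3"
    by (simp add: power_divide flip: exp_of_nat_mult)
  also have "\<dots> \<le> 2 / 5"
    using exp_3_ge by (simp add: field_simps)
  finally show ?thesis .
qed

lemma binom_cdf_2_at_one_over_large:
  assumes "6 \<le> n"
  shows "binom_cdf n 2 (1 / n) \<le> 3 / 4"
proof -
  define x where "x = 1 / real n"
  have x: "0 \<le> x" "x \<le> 1 / 6" "real (n - 1) * x = 1 - x"
    using assms by (auto simp: x_def of_nat_diff field_simps)
  have "binom_cdf n 2 x = (1 - x) ^ (n - 1) * (2 * (1 - x / 2))"
    using assms x by (simp add: binom_cdf_two x_def)
  also have "\<dots> \<le> exp (- (real (n - 1) * (x + x\<^sup>2 / 2))) * (2 * exp (- (x / 2)))"
    using x exp_ge_add_one_self[of "- (x / 2)"]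
    by (intro mult_mono one_minus_power_le_exp_quadratic) auto
  also have "\<dots> = 2 * exp (- (real (n - 1) * (x + x\<^sup>2 / 2) + x / 2))"
    by (subst minus_add_distrib, subst exp_add) simp
  also have "real (n - 1) * (x + x\<^sup>2 / 2) + x / 2 = 1 - x\<^sup>2 / 2"
  proof -
    have "real (n - 1) * (x + x\<^sup>2 / 2) + x / 2 = real (n - 1) * x * (1 + x / 2) + x / 2"
      by (simp add: algebra_simps power2_eq_square)
    also have "\<dots> = 1 - x\<^sup>2 / 2"
      unfolding x(3) by (simp add: field_simps power2_eq_square)
    finally show ?thesis .
  qed
  also have "2 * exp (- (1 - x\<^sup>2 / 2)) \<le> 2 * exp (- (71 / 72))"
    using x power_mono[OF x(2,1), of 2] by (simp add: power_divide)
  also have "\<dots> \<le> 3 / 4"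
  proof -
    have "2.718 * (71 / 72) \<le> exp 1 * exp (- 1 / 72 :: real)"
      using exp_of_nat_ge[of 1] exp_ge_add_one_self[of "- 1 / 72 :: real"] by (intro mult_mono) auto
    then have "8 / 3 \<le> exp (71 / 72 :: real)"
      by (simp flip: exp_add)
    then show ?thesis
      by (simp add: exp_minus field_simps)
  qed
  finally show ?thesis
    by (simp add: x_def)
qed

lemma binom_cdf_2_at_one_over:
  assumes "2 \<le> n"
  shows "binom_cdf n 2 (1 / n) \<le> 3 / 4"
proof -
  consider "n \<in> {2, 3, 4, 5}" | "6 \<le> n"
    using assms by force
  then show ?thesis
  proof cases
    case 1
    then show ?thesis
      by (auto simp: binom_cdf_def Bernstein_def eval_nat_numeral power_divide)
  qed (rule binom_cdf_2_at_one_over_large)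
qed

lemma binom_cdf_2_at_three_over:
  assumes "3 \<le> n"
  shows "binom_cdf n 2 (3 / n) \<le> 1 / 4"
proof -
  define x where "x = 3 / real n"
  have x: "0 \<le> x" "x \<le> 1" "real (n - 1) * x = 3 - x"
    using assms by (auto simp: x_def of_nat_diff field_simps)
  have "binom_cdf n 2 x = (1 - x) ^ (n - 1) * (4 - x)"
    using assms by (simp add: binom_cdf_two x_def)
  also have "\<dots> \<le> exp (- (real (n - 1) * (x + x\<^sup>2 / 2))) * 4"
    using x by (intro mult_mono one_minus_power_le_exp_quadratic) auto
  also have "real (n - 1) * (x + x\<^sup>2 / 2) = 3 + x * (1 - x) / 2"
  proof -
    have "real (n - 1) * (x + x\<^sup>2 / 2) = real (n - 1) * x * (1 + x / 2)"
      by (simp add: algebra_simps power2_eq_square)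
    also have "\<dots> = 3 + x * (1 - x) / 2"
      unfolding x(3) by (simp add: field_simps power2_eq_square)
    finally show ?thesis .
  qed
  also have "exp (- (3 + x * (1 - x) / 2)) * 4 \<le> exp (- 3) * 4"
    using x by simp
  also have "\<dots> \<le> 1 / 4"
    using exp_3_ge by (simp add: exp_minus field_simps)
  finally show ?thesis
    by (simp add: x_def)
qed

lemma binom_cdf_3_at_three_over_large:
  assumes "6 \<le> n"
  shows "binom_cdf n 3 (3 / n) \<le> 5 / 8"
proof -
  define p where "p = 3 / real n"
  have p: "0 \<le> p" "p \<le> 1 / 2" "real n * p = 3" "real (n - 1) * p = 3 - p"
    "real (n - 2) * p = 3 - 2 * p"
    using assms by (auto simp: p_def of_nat_diff field_simps)
  have "2 * real (n choose 2) = real n * real (n - 1)"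
    using binomial_absorption[of 1 n] by (simp add: numeral_2_eq_2 flip: of_nat_mult)
  then have "real (n choose 2) * p\<^sup>2 = (real n * p) * (real (n - 1) * p) / 2"
    by (simp add: field_simps power2_eq_square)
  then have "binom_cdf n 3 p = (1 - p) ^ (n - 2) * (17 / 2 - 13 / 2 * p + p\<^sup>2)"
    using assms p by (simp add: binom_cdf_three p_def) (simp add: field_simps power2_eq_square)
  also have "\<dots> \<le> exp (- (real (n - 2) * (p + p\<^sup>2 / 2))) * (12 * (1 - p))"
  proof (intro mult_mono one_minus_power_le_exp_quadratic)
    show "17 / 2 - 13 / 2 * p + p\<^sup>2 \<le> 12 * (1 - p)"
      using p mult_left_mono[OF p(2) p(1)] by (simp add: power2_eq_square)
  qed (use p in auto)
  also have "\<dots> \<le> exp (- (3 - p)) * (12 * (1 - p))"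
  proof -
    have "real (n - 2) * (p + p\<^sup>2 / 2) = (3 - 2 * p) * (1 + p / 2)"
      unfolding p(5)[symmetric] by (simp add: algebra_simps power2_eq_square)
    also have "\<dots> \<ge> 3 - p"
      using p mult_left_mono[OF p(2) p(1)] by (simp add: algebra_simps)
    finally show ?thesis
      using p by (intro mult_right_mono) auto
  qed
  also have "\<dots> = 12 * exp (- 3) * (exp p * (1 - p))"
    by (simp add: exp_diff exp_minus field_simps)
  also have "\<dots> \<le> 12 * exp (- 3) * 1"
    using exp_ge_add_one_self[of "- p"] p
    by (intro mult_left_mono) (auto simp: exp_minus field_simps)
  also have "\<dots> \<le> 5 / 8"
    using exp_3_ge by (simp add: exp_minus field_simps)
  finally show ?thesis
    by (simp add: p_def)
qed

lemma binom_cdf_3_at_three_over: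
  assumes "3 \<le> n"
  shows "binom_cdf n 3 (3 / n) \<le> 5 / 8"
proof -
  consider "n = 3" | "n \<in> {4, 5}" | "6 \<le> n"
    using assms by force
  then show ?thesis
  proof cases
    case 1
    then show ?thesis
      using binom_cdf_at_1[of 2 3] by (simp add: numeral_3_eq_3)
  next
    case 2
    then show ?thesis
      by (auto simp: binom_cdf_def Bernstein_def eval_nat_numeral power_divide)
  qed (rule binom_cdf_3_at_three_over_large)
qed

lemma binom_cdf_3_at_seven_over:
  assumes "7 \<le> n"
  shows "binom_cdf n 3 (7 / n) \<le> 1 / 8"
proof -
  have "binom_cdf n (Suc 2) (7 / n) \<le> (1 / (1 / 4)) ^ 2 * exp (- (real n * (7 / n) * (1 - 1 / 4)))"
    using assms by (intro binom_cdf_le_chernoff) auto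
  also have "\<dots> \<le> 16 * exp (- 5)"
    using assms by simp
  also have "\<dots> \<le> 1 / 8"
    using exp_of_nat_ge[of 5] by (simp add: exp_minus field_simps)
  finally show ?thesis
    by (simp add: numeral_3_eq_3)
qed

lemma binom_cdf_Suc_at_2k_plus_1_over:
  assumes "3 \<le> k" "2 * k + 1 \<le> n"
  shows "binom_cdf n (Suc k) ((2 * real k + 1) / n) \<le> 2 / 5"
proof -
  have "binom_cdf n (Suc k) ((2 * real k + 1) / n) \<le> (2 / exp 1) ^ k * exp (- (1 / 2))"
    using assms by (intro binom_cdf_le_chernoff_half) auto
  also have "\<dots> \<le> 2 / 5 * 1"
    using two_div_e_power_le[OF assms(1)] by (intro mult_mono) auto
  finally show ?thesis
    by simp
qed

lemma binom_cdf_Suc_at_2k_plus_3_over: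
  assumes "3 \<le> k" "2 * k + 3 \<le> n"
  shows "binom_cdf n (Suc k) ((2 * real k + 3) / n) \<le> 1 / 4"
proof -
  have "16 \<le> exp (3 / 2 :: real) ^ 2"
    using exp_3_ge by (simp flip: exp_of_nat_mult)
  then have "4 \<le> exp (3 / 2 :: real)"
    using power2_le_imp_le[of 4 "exp (3 / 2 :: real)"] by simp
  then have exp_le: "exp (- (3 / 2)) \<le> (1 / 4 :: real)"
    by (simp add: exp_minus field_simps)
  have "binom_cdf n (Suc k) ((2 * real k + 3) / n) \<le> (2 / exp 1) ^ k * exp (- (3 / 2))"
    using assms by (intro binom_cdf_le_chernoff_half) auto
  also have "\<dots> \<le> 1 * (1 / 4)"
    using two_div_e_power_le[OF assms(1)] exp_le by (intro mult_mono) auto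
  finally show ?thesis
    by simp
qed

lemma Bernstein_1_at_one_over_ge:
  assumes "2 \<le> n"
  shows "1 / 4 \<le> Bernstein (n - 1) 1 (1 / n)"
proof -
  define m where "m = n - 1"
  have m: "1 \<le> m" "real n = real m + 1"
    using assms by (auto simp: m_def)
  have "(1 + 1 / real m) ^ m \<le> exp (1 / real m) ^ m"
    using exp_ge_add_one_self[of "1 / real m"] by (intro power_mono) (auto simp: add.commute)
  also have "\<dots> = exp 1"
    using m by (simp flip: exp_of_nat_mult)
  also have "\<dots> \<le> 4"
    using e_less_272 by simp
  finally have "1 / 4 \<le> inverse ((1 + 1 / real m) ^ m)"
    using m by (simp add: field_simps)
  also have "\<dots> = real m / real n * (1 - 1 / real n) ^ (m - 1)"
    using m by (simp add: m field_simps power_inverse flip: power_Suc)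
  also have "\<dots> = Bernstein m 1 (1 / n)"
    by (simp add: Bernstein_def)
  finally show ?thesis
    by (simp add: m_def)
qed

section \<open>Choosing the number of winners\<close>

(* By the mean value theorem, \<phi> < c somewhere left of x and \<phi> > c somewhere right of x,
   which unimodality of \<phi> rules out. *)
lemma le_max_endpoints_if_deriv_unimodal:
  fixes f \<phi> :: "real \<Rightarrow> real"
  assumes deriv: "\<And>y. a \<le> y \<Longrightarrow> y \<le> b \<Longrightarrow> (f has_real_derivative c - \<phi> y) (at y)"
    and mono: "mono_on {a..m} \<phi>" and antimono: "antimono_on {m..b} \<phi>"
    and start: "m \<le> a \<or> c \<le> \<phi> a"
    and x: "a \<le> x" "x \<le> b"
  shows "f x \<le> max (f a) (f b)"
proof (rule ccontr)
  assume "\<not> f x \<le> max (f a) (f b)"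
  then have fx: "f a < f x" "f b < f x"
    by auto
  then have "a < x" "x < b"
    using x by (auto simp: order.order_iff_strict)
  obtain \<xi> where \<xi>: "a < \<xi>" "\<xi> < x" "f x - f a = (x - a) * (c - \<phi> \<xi>)"
    using MVT2[OF \<open>a < x\<close>, of f "\<lambda>y. c - \<phi> y"] deriv x by auto
  obtain \<eta> where \<eta>: "x < \<eta>" "\<eta> < b" "f b - f x = (b - x) * (c - \<phi> \<eta>)"
    using MVT2[OF \<open>x < b\<close>, of f "\<lambda>y. c - \<phi> y"] deriv x by auto
  have rise: "0 < (x - a) * (c - \<phi> \<xi>)"
    using \<xi> fx by linarith
  have "\<phi> \<xi> < c"
    using zero_less_mult_pos[OF rise] \<open>a < x\<close> by simp
  have fall: "0 < (b - x) * (\<phi> \<eta> - c)"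
    using \<eta> fx by (simp add: algebra_simps)
  have "c < \<phi> \<eta>"
    using zero_less_mult_pos[OF fall] \<open>x < b\<close> by simp
  show False
  proof (cases "\<xi> \<le> m")
    case True
    then have "\<phi> a \<le> \<phi> \<xi>"
      using \<xi> x by (intro mono_onD[OF mono]) auto
    then show False
      using start True \<xi> \<open>\<phi> \<xi> < c\<close> by linarith
  next
    case False
    then have "\<phi> \<eta> \<le> \<phi> \<xi>"
      using \<xi> \<eta> by (intro monotone_onD[OF antimono]) auto
    then show False
      using \<open>\<phi> \<xi> < c\<close> \<open>c < \<phi> \<eta>\<close> by linarith
  qed
qed

(* k / (n - 1) is the mode of Bernstein (n - 1) k. *)
lemma tail_bound_between_endpoints:
  assumes k: "1 \<le> k" "k < n" and ab: "0 \<le> a" "a \<le> p" "p \<le> b" "b \<le> 1"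
    and start: "real k / real (n - 1) \<le> a \<or> 1 / 4 \<le> real k * Bernstein (n - 1) k a"
    and at_a: "binom_cdf n (Suc k) a + real n * a / (4 * real k) \<le> 1"
    and at_b: "binom_cdf n (Suc k) b + real n * b / (4 * real k) \<le> 1"
  shows "binom_cdf n (Suc k) p + real n * p / (4 * real k) \<le> 1"
proof -
  obtain j where j: "k = Suc j"
    using k by (cases k) auto
  define \<phi> where "\<phi> y = real n * Bernstein (n - 1) k y" for y
  have "binom_cdf n (Suc k) p + real n * p / (4 * real k)
      \<le> max (binom_cdf n (Suc k) a + real n * a / (4 * real k))
             (binom_cdf n (Suc k) b + real n * b / (4 * real k))"
  proof (rule le_max_endpoints_if_deriv_unimodal[where
        f = "\<lambda>y. binom_cdf n (Suc k) y + real n * y / (4 * real k)" and \<phi> = \<phi>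
        and c = "real n / (4 * real k)" and m = "k / real (n - 1)"])
    show "((\<lambda>y. binom_cdf n (Suc k) y + real n * y / (4 * real k)) has_real_derivative
        real n / (4 * real k) - \<phi> y) (at y)" if "a \<le> y" "y \<le> b" for y
      unfolding \<phi>_def using k by (auto intro!: derivative_eq_intros has_real_derivative_binom_cdf)
    have "mono_on {0..k / real (n - 1)} (Bernstein (n - 1) k)"
      using Bernstein_mono_on[of j "n - 1"] k j by simp
    then show "mono_on {a..k / real (n - 1)} \<phi>"
      unfolding \<phi>_def using ab by (auto simp: monotone_on_def intro!: mult_left_mono)
    have "antimono_on {k / real (n - 1)..1} (Bernstein (n - 1) k)"
      using Bernstein_antimono_on[of j "n - 1"] k j by simp
    then show "antimono_on {k / real (n - 1)..b} \<phi>"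
      unfolding \<phi>_def using ab by (auto simp: monotone_on_def intro!: mult_left_mono)
    show "k / real (n - 1) \<le> a \<or> real n / (4 * real k) \<le> \<phi> a"
      using start k unfolding \<phi>_def by (auto simp: field_simps)
  qed (use ab in auto)
  then show ?thesis
    using at_a at_b by simp
qed

lemma tail_bound_k_eq_1:
  assumes "2 \<le> n" "1 / n \<le> p" "real n * p \<le> 3" "p \<le> 1"
  shows "binom_cdf n 2 p + real n * p / 4 \<le> 1"
proof -
  define b where "b = min 1 (3 / n)"
  have "binom_cdf n (Suc 1) p + real n * p / (4 * real 1) \<le> 1"
  proof (rule tail_bound_between_endpoints[of 1 n "1 / n" p b])
    show "real 1 / real (n - 1) \<le> 1 / n \<or> 1 / 4 \<le> real 1 * Bernstein (n - 1) 1 (1 / n)"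
      using Bernstein_1_at_one_over_ge[OF assms(1)] by simp
    show "binom_cdf n (Suc 1) (1 / n) + real n * (1 / n) / (4 * real 1) \<le> 1"
      using binom_cdf_2_at_one_over[OF assms(1)] assms by (simp add: numeral_2_eq_2)
    show "binom_cdf n (Suc 1) b + real n * b / (4 * real 1) \<le> 1"
    proof (cases "3 \<le> n")
      case True
      then show ?thesis
        using binom_cdf_2_at_three_over[OF True] by (simp add: b_def numeral_2_eq_2)
    next
      case False
      then have "n = 2"
        using assms by simp
      then show ?thesis
        using binom_cdf_at_1[of 1 2] by (simp add: b_def)
    qed
    show "p \<le> b"
      using assms by (simp add: b_def field_simps)
  qed (use assms in \<open>auto simp: b_def\<close>)
  then show ?thesis
    by (simp add: numeral_2_eq_2)
qed

lemma tail_bound_k_eq_2: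
  assumes "3 \<le> real n * p" "real n * p \<le> 7" "p \<le> 1"
  shows "binom_cdf n 3 p + real n * p / 8 \<le> 1"
proof -
  have n: "3 \<le> n"
    using assms mult_left_mono[OF assms(3), of "real n"] by simp
  define b where "b = min 1 (7 / n)"
  have "binom_cdf n (Suc 2) p + real n * p / (4 * real 2) \<le> 1"
  proof (rule tail_bound_between_endpoints[of 2 n "3 / n" p b])
    show "real 2 / real (n - 1) \<le> 3 / n \<or> 1 / 4 \<le> real 2 * Bernstein (n - 1) 2 (3 / n)"
      using n by (simp add: of_nat_diff field_simps)
    show "binom_cdf n (Suc 2) (3 / n) + real n * (3 / n) / (4 * real 2) \<le> 1"
      using binom_cdf_3_at_three_over[OF n] n by (simp add: numeral_3_eq_3)
    show "binom_cdf n (Suc 2) b + real n * b / (4 * real 2) \<le> 1"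
    proof (cases "7 \<le> n")
      case True
      then show ?thesis
        using binom_cdf_3_at_seven_over[OF True] by (simp add: b_def numeral_3_eq_3)
    next
      case False
      then show ?thesis
        using binom_cdf_at_1[of 2 n] n by (simp add: b_def)
    qed
    show "3 / n \<le> p" "p \<le> b"
      using assms n by (simp_all add: b_def field_simps)
  qed (use n in \<open>auto simp: b_def\<close>)
  then show ?thesis
    by (simp add: numeral_3_eq_3)
qed

lemma tail_bound_large_k:
  assumes k: "3 \<le> k" and p: "2 * real k + 1 \<le> real n * p" "real n * p \<le> 2 * real k + 3" "p \<le> 1"
  shows "binom_cdf n (Suc k) p + real n * p / (4 * real k) \<le> 1"
proof -
  have n: "2 * k + 1 \<le> n"
    using p mult_left_mono[OF p(3), of "real n"] by simp
  define b where "b = min 1 ((2 * real k + 3) / n)"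
  show ?thesis
  proof (rule tail_bound_between_endpoints[of k n "(2 * real k + 1) / n" p b])
    have "real k * 2 \<le> real k * real n"
      using n k by (intro mult_left_mono) auto
    moreover have "1 < real n"
      using n k by simp
    ultimately have "real k / real (n - 1) \<le> (2 * real k + 1) / n"
      using n by (simp add: of_nat_diff field_simps)
    then show "real k / real (n - 1) \<le> (2 * real k + 1) / n
        \<or> 1 / 4 \<le> real k * Bernstein (n - 1) k ((2 * real k + 1) / n)" ..
    have "real n * ((2 * real k + 1) / n) / (4 * real k) \<le> 3 / 5"
      using n k by (simp add: field_simps)
    then show "binom_cdf n (Suc k) ((2 * real k + 1) / n)
        + real n * ((2 * real k + 1) / n) / (4 * real k) \<le> 1"
      using binom_cdf_Suc_at_2k_plus_1_over[OF k n] by linarith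
    show "binom_cdf n (Suc k) b + real n * b / (4 * real k) \<le> 1"
    proof (cases "2 * k + 3 \<le> n")
      case True
      then have b: "b = (2 * real k + 3) / n"
        by (simp add: b_def field_simps)
      have "real n * b / (4 * real k) \<le> 3 / 4"
        using True k unfolding b by (simp add: field_simps)
      then show ?thesis
        using binom_cdf_Suc_at_2k_plus_3_over[OF k True] unfolding b by linarith
    next
      case False
      then have "b = 1"
        using n by (simp add: b_def field_simps)
      then show ?thesis
        using binom_cdf_at_1[of k n] n k False by (simp add: field_simps)
    qed
    show "(2 * real k + 1) / n \<le> p" "p \<le> b"
      using p n by (simp_all add: b_def field_simps)
  qed (use n k in \<open>auto simp: b_def\<close>)
qed

lemma exists_odd_bracket:
  fixes x :: real
  assumes "1 \<le> x"
  shows "\<exists>k. 2 * real k + 1 \<le> x \<and> x \<le> 2 * real k + 3"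
proof -
  define k where "k = nat \<lfloor>(x - 1) / 2\<rfloor>"
  have "real k = \<lfloor>(x - 1) / 2\<rfloor>"
    using assms by (simp add: k_def)
  then have "2 * real k + 1 \<le> x" "x \<le> 2 * real k + 3"
    using of_int_floor_le[of "(x - 1) / 2"] real_of_int_floor_add_one_gt[of "(x - 1) / 2"]
    by (simp_all add: field_simps)
  then show ?thesis
    by blast
qed

lemma exists_k_tail_ge_quarter:
  assumes n: "2 \<le> n" and p: "1 / n \<le> p" "p \<le> 1"
  shows "\<exists>k. 1 \<le> k \<and> real k \<le> real n * p \<and> p / 4 \<le> real k / real n * (1 - binom_cdf n (Suc k) p)"
proof -
  have "1 \<le> real n * p"
    using n p by (simp add: field_simps)
  consider "real n * p \<le> 3" | "3 < real n * p" "real n * p \<le> 7" | "7 < real n * p"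
    by linarith
  then have "\<exists>k. 1 \<le> k \<and> real k \<le> real n * p
      \<and> binom_cdf n (Suc k) p + real n * p / (4 * real k) \<le> 1"
  proof cases
    case 1
    then show ?thesis
      using tail_bound_k_eq_1[OF n p(1) 1 p(2)] \<open>1 \<le> real n * p\<close>
      by (intro exI[of _ 1]) (simp add: numeral_2_eq_2)
  next
    case 2
    then show ?thesis
      using tail_bound_k_eq_2[of n p] p by (intro exI[of _ 2]) (simp add: numeral_3_eq_3)
  next
    case 3
    obtain k where k: "2 * real k + 1 \<le> real n * p" "real n * p \<le> 2 * real k + 3"
      using exists_odd_bracket[of "real n * p"] 3 by auto
    then have "3 \<le> k"
      using 3 by linarith
    then show ?thesis
      using tail_bound_large_k[OF _ k p(2)] k by (intro exI[of _ k]) auto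
  qed
  then obtain k where k: "1 \<le> k" "real k \<le> real n * p"
    and bound: "binom_cdf n (Suc k) p + real n * p / (4 * real k) \<le> 1"
    by blast
  have "p / 4 = real k / real n * (real n * p / (4 * real k))"
    using n k by (simp add: field_simps)
  also have "\<dots> \<le> real k / real n * (1 - binom_cdf n (Suc k) p)"
    using bound by (intro mult_left_mono) auto
  finally show ?thesis
    using k by blast
qed

section \<open>Revenue of the highest-k-bids-win auction\<close>

lemma integrable_on_mono_on_mult_continuous:
  fixes f g :: "real \<Rightarrow> real"
  assumes f: "mono_on {a..b} f" and g: "continuous_on {a..b} g"
  shows "(\<lambda>x. f x * g x) integrable_on {a..b}"
proof (cases "a \<le> b")
  case True
  have "f \<in> borel_measurable (lebesgue_on {a..b})"
    using integrable_on_mono_on[OF f] by (rule integrable_imp_measurable)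
  moreover have "bounded (f ` {a..b})"
  proof (rule boundedI)
    fix y assume "y \<in> f ` {a..b}"
    then obtain x where "x \<in> {a..b}" "y = f x"
      by blast
    then have "f a \<le> y" "y \<le> f b"
      using True by (auto intro: mono_onD[OF f])
    then show "norm y \<le> \<bar>f a\<bar> + \<bar>f b\<bar>"
      by auto
  qed
  moreover have "g absolutely_integrable_on {a..b}"
    using g by (rule absolutely_integrable_continuous_real)
  ultimately have "(\<lambda>x. f x * g x) absolutely_integrable_on {a..b}"
    by (intro absolutely_integrable_bounded_measurable_product_real) auto
  then show ?thesis
    using set_lebesgue_integral_eq_integral(1) by blast
qed auto

lemma value_of_quantile_bounds:
  assumes "cont_dist_01 F" "0 \<le> t"
  shows "0 \<le> value_of_quantile F t" "value_of_quantile F t \<le> 1"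
proof -
  have zero: "0 \<in> {x \<in> {0..1}. F x \<le> t}"
    using assms by (simp add: cont_dist_01_def)
  show "0 \<le> value_of_quantile F t"
    unfolding value_of_quantile_def using zero by (intro cSup_upper bdd_aboveI[of _ 1]) auto
  show "value_of_quantile F t \<le> 1"
    unfolding value_of_quantile_def by (rule cSup_least) (use zero in blast, auto)
qed

lemma value_of_quantile_mono:
  assumes "cont_dist_01 F" "0 \<le> s" "s \<le> t"
  shows "value_of_quantile F s \<le> value_of_quantile F t"
proof -
  have "0 \<in> {x \<in> {0..1}. F x \<le> s}"
    using assms by (simp add: cont_dist_01_def)
  then have "{x \<in> {0..1}. F x \<le> s} \<noteq> {}"
    by blast
  moreover have "bdd_above {x \<in> {0..1}. F x \<le> t}"
    by (rule bdd_aboveI[of _ 1]) auto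
  ultimately show ?thesis
    unfolding value_of_quantile_def using assms(3) by (intro cSup_subset_mono) auto
qed

lemma alloc_topk_eq: "alloc_topk n k = (\<lambda>t. binom_cdf (n - 1) k (1 - t))"
  by (simp add: alloc_topk_def binom_cdf_def Bernstein_def fun_eq_iff)

lemma one_minus_mult_deriv_alloc_topk:
  assumes "1 \<le> k"
  shows "(1 - t) * deriv (alloc_topk n k) t = real k * Bernstein (n - 1) k (1 - t)"
proof -
  obtain j where j: "k = Suc j"
    using assms by (cases k) auto
  have "(alloc_topk n k has_real_derivative real (n - 1) * Bernstein (n - 1 - 1) j (1 - t)) (at t)"
    unfolding alloc_topk_eq j
    by (rule DERIV_chain2[OF has_real_derivative_binom_cdf, of "\<lambda>t. 1 - t", THEN DERIV_cong])
      (auto intro!: derivative_eq_intros)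
  then have "deriv (alloc_topk n k) t = real (n - 1) * Bernstein (n - 1 - 1) j (1 - t)"
    by (rule DERIV_imp_deriv)
  then show ?thesis
    using Bernstein_absorption[of "n - 1" "1 - t" j] by (simp add: j mult_ac)
qed

lemma per_agent_rev_eq_integral:
  assumes "1 \<le> k"
  shows "per_agent_rev F n k
    = integral {0..1} (\<lambda>t. value_of_quantile F t * (real k * Bernstein (n - 1) k (1 - t)))"
proof -
  have "revenue_curve F t * deriv (alloc_topk n k) t
      = value_of_quantile F t * ((1 - t) * deriv (alloc_topk n k) t)" for t
    by (simp add: revenue_curve_def)
  then show ?thesis
    by (simp only: per_agent_rev_def one_minus_mult_deriv_alloc_topk[OF assms])
qed

lemma has_integral_Bernstein_reflected:
  assumes "1 \<le> n" "0 \<le> q" "q \<le> 1"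
  shows "((\<lambda>t. real k * Bernstein (n - 1) k (1 - t)) has_integral
      real k / real n * (1 - binom_cdf n (Suc k) (1 - q))) {q..1}"
proof -
  define \<Psi> where "\<Psi> t = real k / real n * binom_cdf n (Suc k) (1 - t)" for t
  have "(\<Psi> has_real_derivative real k * Bernstein (n - 1) k (1 - t)) (at t)" for t
  proof -
    have "((\<lambda>t. binom_cdf n (Suc k) (1 - t)) has_real_derivative
        - real n * Bernstein (n - 1) k (1 - t) * (- 1)) (at t)"
      by (rule DERIV_chain2[OF has_real_derivative_binom_cdf]) (auto intro!: derivative_eq_intros)
    from DERIV_cmult[OF this, of "real k / real n"] show ?thesis
      using assms by (simp add: \<Psi>_def[abs_def])
  qed
  then have "((\<lambda>t. real k * Bernstein (n - 1) k (1 - t)) has_integral \<Psi> 1 - \<Psi> q) {q..1}"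
    using assms by (intro fundamental_theorem_of_calculus)
      (auto simp: has_real_derivative_iff_has_vector_derivative[symmetric] intro: DERIV_subset)
  then show ?thesis
    by (simp add: \<Psi>_def binom_cdf_at_0 algebra_simps)
qed

lemma per_agent_rev_ge:
  assumes F: "cont_dist_01 F" and k: "1 \<le> k" and n: "1 \<le> n" and q: "0 \<le> q" "q \<le> 1"
  shows "value_of_quantile F q * (real k / real n * (1 - binom_cdf n (Suc k) (1 - q)))
    \<le> per_agent_rev F n k"
proof -
  define v where "v = value_of_quantile F"
  define g where "g t = real k * Bernstein (n - 1) k (1 - t)" for t
  have g_nonneg: "0 \<le> g t" if "t \<in> {0..1}" for t
    using that by (simp add: g_def Bernstein_nonneg)
  have vg_int: "(\<lambda>t. v t * g t) integrable_on {a..b}" if "0 \<le> a" for a b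
  proof (rule integrable_on_mono_on_mult_continuous)
    show "mono_on {a..b} v"
      using that by (auto intro!: mono_onI value_of_quantile_mono[OF F] simp: v_def)
    show "continuous_on {a..b} g"
      unfolding g_def Bernstein_def by (intro continuous_intros)
  qed
  have g_int: "(g has_integral real k / real n * (1 - binom_cdf n (Suc k) (1 - q))) {q..1}"
    unfolding g_def using n q by (rule has_integral_Bernstein_reflected)
  have vq_int: "((\<lambda>t. v q * g t) has_integral
      v q * (real k / real n * (1 - binom_cdf n (Suc k) (1 - q)))) {q..1}"
    using g_int by (rule has_integral_mult_right)
  then have "v q * (real k / real n * (1 - binom_cdf n (Suc k) (1 - q)))
      = integral {q..1} (\<lambda>t. v q * g t)"
    by (rule integral_unique[symmetric])
  also have "\<dots> \<le> integral {q..1} (\<lambda>t. v t * g t)"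
    using vq_int vg_int q g_nonneg
    by (intro integral_le) (auto intro!: mult_right_mono value_of_quantile_mono[OF F] simp: v_def)
  also have "\<dots> \<le> integral {0..1} (\<lambda>t. v t * g t)"
    using vg_int q g_nonneg value_of_quantile_bounds[OF F]
    by (intro integral_subset_le) (auto simp: v_def)
  also have "\<dots> = per_agent_rev F n k"
    using per_agent_rev_eq_integral[OF k] by (simp add: v_def g_def)
  finally show ?thesis
    by (simp add: v_def)
qed

theorem mainTheorem17:
  fixes F :: "real \<Rightarrow> real" and n :: nat and q :: real
  assumes "n \<ge> 2" and "cont_dist_01 F" and "0 \<le> q" and "q \<le> 1 - 1 / real n"
  shows "\<exists>k::nat. 1 \<le> k \<and> real k \<le> (1 - q) * real n \<and>
           real n * per_agent_rev F n k \<ge> 1/4 * (real n * revenue_curve F q)"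
proof -
  define p where "p = 1 - q"
  have p: "1 / real n \<le> p" "p \<le> 1"
    using assms by (auto simp: p_def)
  have "q \<le> 1"
    using p(1) divide_nonneg_nonneg[of 1 "real n"] unfolding p_def by linarith
  obtain k where k: "1 \<le> k" "real k \<le> real n * p"
    and tail: "p / 4 \<le> real k / real n * (1 - binom_cdf n (Suc k) p)"
    using exists_k_tail_ge_quarter[OF assms(1) p] by blast
  have "revenue_curve F q / 4 = value_of_quantile F q * (p / 4)"
    by (simp add: revenue_curve_def p_def)
  also have "\<dots> \<le> value_of_quantile F q * (real k / real n * (1 - binom_cdf n (Suc k) p))"
    using tail value_of_quantile_bounds[OF assms(2,3)] by (intro mult_left_mono) auto
  also have "\<dots> \<le> per_agent_rev F n k"
    using per_agent_rev_ge[OF assms(2) k(1) _ assms(3) \<open>q \<le> 1\<close>] assms(1) by (simp add: p_def)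
  finally have "real n * (revenue_curve F q / 4) \<le> real n * per_agent_rev F n k"
    by (rule mult_left_mono) simp
  then show ?thesis
    using k by (auto simp: p_def mult.commute)
qed

end
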